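(* Suppose $\mathcal{T}'$ is obtained from $\mathcal{T}$ by collapsing two adjacent leaves labeled $D_{P_k,s_k} \circ \dots \circ D_{P_1,s_1}$ and $D_{Q_l,t_l} \circ \dots \circ D_{Q_1,t_1}$, where $s_i < 2\tau(P_i)$ and $t_i < 2\tau(Q_i)$ for all $i$. Then the label of the new leaf of $\mathcal{T}'$ has the form $D_{R_{k+1},u_{k+1}} \circ \cdots \circ D_{R_1,u_1}$, where $u_i < 2 \tau(R_i)$ for all $i$.
   Context: All knots are oriented; for a knot $K$, $K^r$ denotes $K$ with reversed orientation, $O$ denotes the unknot, and $\tau$ is the Ozsváth–Szabó concordance invariant (additive under connected sum). Let $B = B_1\cup B_2\cup B_3$ be the (oriented) Borromean rings. For knots $J,K$ and integers $s,t$, $D_{J,s}(K,t)$ is the knot obtained from $B_3$ by $s$-twisted infection by $J$ along $B_1$ and $t$-twisted infection by $K$ along $B_2$; $D_{J,s}(K)$ means $D_{J,s}(K,0)$, and $D_{J,s}$ is regarded as a satellite operator. (Known result: $\tau(D_{J,s}(K,t)) = 1$ if $s<2\tau(J)$ and $t<2\tau(K)$, $-1$ if $s>2\tau(J)$ and $t>2\tau(K)$, and $0$ otherwise.) A labeled binary tree is a binary tree each of whose leaves is labeled with a satellite operation (here, a composite of operators $D_{J,s}$). A collapse of a labeled tree $\mathcal{T}$ having two adjacent leaves labeled $D_{P_k,s_k} \circ \dots \circ D_{P_1,s_1}$ and $D_{Q_l,t_l} \circ \dots \circ D_{Q_1,t_1}$ produces the labeled tree $\mathcal{T}'$ obtained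 by deleting these two leaves and labeling the new leaf (their former parent) $D_{P_k,s_k} \circ \dots \circ D_{P_1,s_1} \circ D_{R,u}$, where $(R,u) = (Q_1 \# Q_1^r,\ 2t_1)$ if $l=1$, and $(R,u) = (D_{Q_1,t_1} \circ \dots \circ D_{Q_{l-2},t_{l-2}} (D_{Q_{l-1},t_{l-1}}(Q_l \# Q_l^r, 2t_l)),\ 0)$ if $l>1$. *)

theory Defs
  imports Main
begin

(* Knots are modelled abstractly by a type 'k; the knot operations are parameters:
   csum = connected sum, rv = orientation reversal,
   D J s K t = D_{J,s}(K,t).
   A composite satellite operator D_{P_k,s_k} o ... o D_{P_1,s_1} is represented by the
   list [(P_1,s_1), ..., (P_k,s_k)] (innermost operator first). *)

type_synonym 'k label = "('k \<times> int) list"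

definition apply_ops :: "('k \<Rightarrow> int \<Rightarrow> 'k \<Rightarrow> int \<Rightarrow> 'k) \<Rightarrow> 'k label \<Rightarrow> 'k \<Rightarrow> 'k" where
  "apply_ops D ops K = fold (\<lambda>(P, s) X. D P s X 0) ops K"

definition collapse_Ru ::
  "('k \<Rightarrow> 'k \<Rightarrow> 'k) \<Rightarrow> ('k \<Rightarrow> 'k) \<Rightarrow> ('k \<Rightarrow> int \<Rightarrow> 'k \<Rightarrow> int \<Rightarrow> 'k) \<Rightarrow> 'k label \<Rightarrow> 'k \<times> int" where
  "collapse_Ru csum rv D qs =
     (let l = length qs; (Ql, tl) = qs ! (l - 1) in
      if l = 1 then (csum Ql (rv Ql), 2 * tl)
      else (let (Q', t') = qs ! (l - 2) in
            (apply_ops D (rev (take (l - 2) qs)) (D Q' t' (csum Ql (rv Ql)) (2 * tl)), 0)))"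

definition collapse_label ::
  "('k \<Rightarrow> 'k \<Rightarrow> 'k) \<Rightarrow> ('k \<Rightarrow> 'k) \<Rightarrow> ('k \<Rightarrow> int \<Rightarrow> 'k \<Rightarrow> int \<Rightarrow> 'k) \<Rightarrow> 'k label \<Rightarrow> 'k label \<Rightarrow> 'k label" where
  "collapse_label csum rv D ps qs = collapse_Ru csum rv D qs # ps"

datatype 'k ltree = Leaf "'k label" | Node "'k ltree" "'k ltree"

inductive collapses ::
  "('k \<Rightarrow> 'k \<Rightarrow> 'k) \<Rightarrow> ('k \<Rightarrow> 'k) \<Rightarrow> ('k \<Rightarrow> int \<Rightarrow> 'k \<Rightarrow> int \<Rightarrow> 'k) \<Rightarrow>
   'k ltree \<Rightarrow> 'k ltree \<Rightarrow> 'k label \<Rightarrow> 'k label \<Rightarrow> bool"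
  for csum rv D where
  base1: "A \<noteq> [] \<Longrightarrow> B \<noteq> [] \<Longrightarrow>
     collapses csum rv D (Node (Leaf A) (Leaf B)) (Leaf (collapse_label csum rv D A B)) A B"
| base2: "A \<noteq> [] \<Longrightarrow> B \<noteq> [] \<Longrightarrow>
     collapses csum rv D (Node (Leaf B) (Leaf A)) (Leaf (collapse_label csum rv D A B)) A B"
| left: "collapses csum rv D T1 T1' A B \<Longrightarrow> collapses csum rv D (Node T1 T2) (Node T1' T2) A B"
| right: "collapses csum rv D T2 T2' A B \<Longrightarrow> collapses csum rv D (Node T1 T2) (Node T1 T2') A B"

end

theory Submission
  imports Defs
begin

(* Every operator D_{P,s} with s < 2 tau(P) sends knots of tau = 1 to knots of tau = 1, so the
   outer part of the new label acts on R without changing tau(R) = 1 > 0 = u.  The only other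
   case is R = Q_1 # Q_1^r, where tau doubles exactly as the twist does. *)

lemma collapses_second_label_nonempty:
  assumes "collapses csum rv D T T' A B"
  shows "B \<noteq> []"
  using assms by (induction rule: collapses.induct) auto

lemma collapse_Ru_single:
  "collapse_Ru csum rv D [(Q, t)] = (csum Q (rv Q), 2 * t)"
  by (simp add: collapse_Ru_def)

lemma collapse_Ru_append_two:
  "collapse_Ru csum rv D (C @ [(Q', t'), (Q, t)]) =
     (apply_ops D (rev C) (D Q' t' (csum Q (rv Q)) (2 * t)), 0)"
  by (simp add: collapse_Ru_def nth_append)

lemma label_cases_by_last_two:
  obtains Q t where "qs = [(Q, t)]"
  | C Q' t' Q t where "qs = C @ [(Q', t'), (Q, t)]"
  | "qs = []"
proof (cases qs rule: rev_cases)
  case (snoc ys q)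
  then show ?thesis
    using that by (cases ys rule: rev_cases) (auto simp: prod_eq_iff)
qed (use that in auto)

lemma tau_apply_ops_eq_one:
  assumes tau_D_pos: "\<And>J s K. s < 2 * tau J \<Longrightarrow> tau K = 1 \<Longrightarrow> tau (D J s K 0) = (1::int)"
    and ops: "\<forall>(P, s) \<in> set ops. s < 2 * tau P"
    and "tau K = 1"
  shows "tau (apply_ops D ops K) = 1"
  using ops \<open>tau K = 1\<close>
proof (induction ops arbitrary: K)
  case Nil
  then show ?case by (simp add: apply_ops_def)
next
  case (Cons op ops)
  obtain P s where op: "op = (P, s)" by fastforce
  have "tau (D P s K 0) = 1" using Cons.prems op tau_D_pos by auto
  then have "tau (apply_ops D ops (D P s K 0)) = 1" using Cons by auto
  then show ?case by (simp add: op apply_ops_def)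
qed

lemma collapse_Ru_twist_bound:
  assumes tau_double: "\<And>Q. tau (csum Q (rv Q)) = 2 * tau Q"
    and tau_D_pos: "\<And>J s K t. s < 2 * tau J \<Longrightarrow> t < 2 * tau K \<Longrightarrow> tau (D J s K t) = (1::int)"
    and "qs \<noteq> []"
    and qs: "\<forall>(Q, t) \<in> set qs. t < 2 * tau Q"
  shows "snd (collapse_Ru csum rv D qs) < 2 * tau (fst (collapse_Ru csum rv D qs))"
  using \<open>qs \<noteq> []\<close>
proof (cases qs rule: label_cases_by_last_two)
  case (1 Q t)
  then show ?thesis using qs by (simp add: collapse_Ru_single tau_double)
next
  case (2 C Q' t' Q t)
  have "tau (D Q' t' (csum Q (rv Q)) (2 * t)) = 1"
    using qs 2 by (auto intro: tau_D_pos simp: tau_double)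
  moreover have "\<forall>(P, s) \<in> set (rev C). s < 2 * tau P"
    using qs 2 by auto
  ultimately have "tau (apply_ops D (rev C) (D Q' t' (csum Q (rv Q)) (2 * t))) = 1"
    using tau_apply_ops_eq_one[of tau D] tau_D_pos by auto
  then show ?thesis by (simp add: 2 collapse_Ru_append_two)
qed simp

theorem proposition3p3:
  fixes tau :: "'k \<Rightarrow> int"
    and csum :: "'k \<Rightarrow> 'k \<Rightarrow> 'k"
    and rv :: "'k \<Rightarrow> 'k"
    and D :: "'k \<Rightarrow> int \<Rightarrow> 'k \<Rightarrow> int \<Rightarrow> 'k"
  assumes tau_add: "\<forall>J K. tau (csum J K) = tau J + tau K"
    and tau_rev: "\<forall>K. tau (rv K) = tau K"
    and tau_D: "\<forall>J s K t. tau (D J s K t) =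
        (if s < 2 * tau J \<and> t < 2 * tau K then 1
         else if s > 2 * tau J \<and> t > 2 * tau K then -1 else 0)"
    and coll: "collapses csum rv D T T' A B"
    and hA: "\<forall>(P, s) \<in> set A. s < 2 * tau P"
    and hB: "\<forall>(Q, t) \<in> set B. t < 2 * tau Q"
  shows "length (collapse_label csum rv D A B) = length A + 1 \<and>
         (\<forall>(R, u) \<in> set (collapse_label csum rv D A B). u < 2 * tau R)"
proof -
  have "\<And>Q. tau (csum Q (rv Q)) = 2 * tau Q"
    using tau_add tau_rev by simp
  moreover have "\<And>J s K t. s < 2 * tau J \<Longrightarrow> t < 2 * tau K \<Longrightarrow> tau (D J s K t) = 1"
    using tau_D by simp
  ultimately have "snd (collapse_Ru csum rv D B) < 2 * tau (fst (collapse_Ru csum rv D B))"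
    using collapse_Ru_twist_bound collapses_second_label_nonempty[OF coll] hB by blast
  then show ?thesis
    using hA by (auto simp: collapse_label_def split: prod.splits)
qed

end
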